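(* Let $\mathfrak{G}=(Y,R,E)$ be a descriptive $\mathsf{MS4}$-frame and $Q=E\circ R$. Then (1) $E[\operatorname{qmax}Y]=E_Q[\operatorname{qmax}Y]$; (2) $\mathfrak{G}$ satisfies the global Kuroda principle iff for every $x\in\operatorname{qmax}Y$, $E_Q[x]\subseteq\operatorname{qmax}Y$ (equivalently, $E_Q[\operatorname{qmax}Y]=\operatorname{qmax}Y$).
   Context: A descriptive $\mathsf{MS4}$-frame is $(Y,R,E)$ with $Y$ a Stone space, $R$ a continuous quasi-order, $E$ a continuous equivalence relation (continuous: $R[x]=\{y:xRy\}$ closed for all $x$, $R^{-1}[U]$ clopen for clopen $U$), such that $xEy$, $yRz$ imply $\exists u$ with $xRu$, $uEz$. $x(E\circ R)y$ iff $\exists z$ with $xRz$ and $zEy$. $xE_Qy$ iff $xQy$ and $yQx$. $\operatorname{qmax}Y=\{x: xRy\Rightarrow yRx\}$. For a relation $S$ and set $A$, $S[A]=\{y:\exists a\in A,\ aSy\}$. Global Kuroda principle: for every $x\in\operatorname{qmax}Y$, $E[x]\subseteq\operatorname{qmax}Y$. *)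

theory Defs
  imports "HOL-Analysis.Analysis"
begin

definition clopenin :: "'a topology \<Rightarrow> 'a set \<Rightarrow> bool" where
  "clopenin T U \<longleftrightarrow> openin T U \<and> closedin T U"

definition stone_space :: "'a topology \<Rightarrow> bool" where
  "stone_space T \<longleftrightarrow> compact_space T \<and> Hausdorff_space T \<and>
     (\<forall>U x. openin T U \<and> x \<in> U \<longrightarrow> (\<exists>C. clopenin T C \<and> x \<in> C \<and> C \<subseteq> U))"

definition continuous_rel :: "'a topology \<Rightarrow> 'a rel \<Rightarrow> bool" where
  "continuous_rel T R \<longleftrightarrow> R \<subseteq> topspace T \<times> topspace T \<and>
     (\<forall>x\<in>topspace T. closedin T (R `` {x})) \<and>
     (\<forall>U. clopenin T U \<longrightarrow> clopenin T ((R\<inverse>) `` U))"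

definition quasi_order_on :: "'a set \<Rightarrow> 'a rel \<Rightarrow> bool" where
  "quasi_order_on Y R \<longleftrightarrow> refl_on Y R \<and> trans R"

definition descriptive_MS4_frame :: "'a topology \<Rightarrow> 'a rel \<Rightarrow> 'a rel \<Rightarrow> bool" where
  "descriptive_MS4_frame T R E \<longleftrightarrow>
     stone_space T \<and>
     quasi_order_on (topspace T) R \<and> continuous_rel T R \<and>
     equiv (topspace T) E \<and> continuous_rel T E \<and>
     (\<forall>x y z. (x, y) \<in> E \<and> (y, z) \<in> R \<longrightarrow> (\<exists>u. (x, u) \<in> R \<and> (u, z) \<in> E))"

text \<open>x (E o R) y iff exists z with x R z and z E y: this is relcomp R E.\<close>
definition EcR :: "'a rel \<Rightarrow> 'a rel \<Rightarrow> 'a rel" where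
  "EcR E R = R O E"

definition eq_part :: "'a rel \<Rightarrow> 'a rel" where
  "eq_part Q = {(x, y). (x, y) \<in> Q \<and> (y, x) \<in> Q}"

definition qmax :: "'a set \<Rightarrow> 'a rel \<Rightarrow> 'a set" where
  "qmax Y R = {x \<in> Y. \<forall>y. (x, y) \<in> R \<longrightarrow> (y, x) \<in> R}"

definition global_Kuroda :: "'a topology \<Rightarrow> 'a rel \<Rightarrow> 'a rel \<Rightarrow> bool" where
  "global_Kuroda T R E \<longleftrightarrow>
     (\<forall>x \<in> qmax (topspace T) R. E `` {x} \<subseteq> qmax (topspace T) R)"

end

theory Submission
  imports Defs
begin

text \<open>Only the relational part of a descriptive \<open>MS4\<close>-frame matters. For \<open>x\<close> quasi-maximal,
  \<open>x E y\<close> gives \<open>x Q y\<close> via \<open>x R x\<close>, and \<open>y Q x\<close> by the commutation condition applied to \<open>y E x R x\<close>.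
  Conversely, if \<open>x Q y\<close> through \<open>x R z E y\<close>, then \<open>z\<close> is again quasi-maximal, so every \<open>E\<^sub>Q\<close>-successor
  of a quasi-maximal point is an \<open>E\<close>-successor of a quasi-maximal point.\<close>

locale MS4_frame =
  fixes Y :: "'a set" and R E :: "'a rel"
  assumes quasi_order: "quasi_order_on Y R"
    and equiv: "equiv Y E"
    and commute: "(x, y) \<in> E \<Longrightarrow> (y, z) \<in> R \<Longrightarrow> \<exists>u. (x, u) \<in> R \<and> (u, z) \<in> E"
begin

lemma qmax_subset: "qmax Y R \<subseteq> Y"
  unfolding qmax_def by blast

lemma qmax_R_closed:
  assumes x: "x \<in> qmax Y R" and xz: "(x, z) \<in> R" and z: "z \<in> Y"
  shows "z \<in> qmax Y R"
proof -
  have "(v, z) \<in> R" if "(z, v) \<in> R" for v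
  proof -
    have "(x, v) \<in> R"
      using quasi_order xz that unfolding quasi_order_on_def by (blast dest: transD)
    then have "(v, x) \<in> R"
      using x unfolding qmax_def by blast
    then show ?thesis
      using quasi_order xz unfolding quasi_order_on_def by (blast dest: transD)
  qed
  then show ?thesis
    using z unfolding qmax_def by blast
qed

lemma E_qmax_subset_eq_part:
  assumes x: "x \<in> qmax Y R" and xy: "(x, y) \<in> E"
  shows "(x, y) \<in> eq_part (EcR E R)"
proof -
  have xx: "(x, x) \<in> R"
    using quasi_order x qmax_subset unfolding quasi_order_on_def by (blast dest: refl_onD)
  have "(y, x) \<in> E"
    using equiv xy unfolding equiv_def by (blast dest: symD)
  then obtain u where "(y, u) \<in> R" "(u, x) \<in> E"
    using commute xx by blast
  then show ?thesis
    using xx xy unfolding eq_part_def EcR_def by blast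
qed

lemma eq_part_qmax_obtain_E:
  assumes x: "x \<in> qmax Y R" and xy: "(x, y) \<in> eq_part (EcR E R)"
  obtains z where "z \<in> qmax Y R" "(z, y) \<in> E"
proof -
  obtain z where xz: "(x, z) \<in> R" and zy: "(z, y) \<in> E"
    using xy unfolding eq_part_def EcR_def by blast
  have "z \<in> Y"
    using equiv_type[OF equiv] zy by blast
  then show ?thesis
    using that qmax_R_closed[OF x xz] zy by blast
qed

lemma E_image_qmax_eq_eq_part_image: "E `` qmax Y R = eq_part (EcR E R) `` qmax Y R"
  using E_qmax_subset_eq_part eq_part_qmax_obtain_E by blast

lemma Kuroda_iff_eq_part:
  "(\<forall>x \<in> qmax Y R. E `` {x} \<subseteq> qmax Y R) \<longleftrightarrow>
   (\<forall>x \<in> qmax Y R. eq_part (EcR E R) `` {x} \<subseteq> qmax Y R)"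
  using E_qmax_subset_eq_part eq_part_qmax_obtain_E by blast

lemma qmax_subset_eq_part_image: "qmax Y R \<subseteq> eq_part (EcR E R) `` qmax Y R"
  using E_qmax_subset_eq_part equiv qmax_subset unfolding equiv_def by (blast dest: refl_onD)

end

lemma descriptive_MS4_frame_imp_MS4_frame:
  "descriptive_MS4_frame T R E \<Longrightarrow> MS4_frame (topspace T) R E"
  unfolding descriptive_MS4_frame_def MS4_frame_def by blast

theorem lemma3p10:
  fixes T :: "'a topology" and R E :: "'a rel"
  assumes "descriptive_MS4_frame T R E"
  shows "E `` qmax (topspace T) R = eq_part (EcR E R) `` qmax (topspace T) R
    \<and> (global_Kuroda T R E \<longleftrightarrow>
           (\<forall>x \<in> qmax (topspace T) R. eq_part (EcR E R) `` {x} \<subseteq> qmax (topspace T) R))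
    \<and> ((\<forall>x \<in> qmax (topspace T) R. eq_part (EcR E R) `` {x} \<subseteq> qmax (topspace T) R) \<longleftrightarrow>
           eq_part (EcR E R) `` qmax (topspace T) R = qmax (topspace T) R)"
proof -
  interpret MS4_frame "topspace T" R E
    using assms by (rule descriptive_MS4_frame_imp_MS4_frame)
  show ?thesis
    using E_image_qmax_eq_eq_part_image Kuroda_iff_eq_part qmax_subset_eq_part_image
    unfolding global_Kuroda_def by blast
qed

end
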